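(* Let $\nu\ge \frac53$, let $\mu=|\nu^2-\frac14|$, and let $\mathcal{H}_\nu(x)=|x^2-\mu|^{1/4}J_\nu(x)$ for $x>0$. Then the first (leftmost) positive local maximum of $\mathcal{H}_\nu$ on $(0,\infty)$ is attained at a point $\xi$ satisfying $$\xi>\nu\sqrt{1-(2\nu)^{-2/3}}.$$
   Context: $J_\nu$ is the Bessel function of the first kind of order $\nu$. *)

theory Defs
  imports "HOL-Analysis.Analysis"
begin

text \<open>Bessel function of the first kind of real order nu, via its power series
  (valid for x > 0; used only there).\<close>
definition bessel_J :: "real \<Rightarrow> real \<Rightarrow> real" where
  "bessel_J nu x =
     (\<Sum>k. (-1) ^ k / (fact k * Gamma (real k + nu + 1)) * (x / 2) powr (2 * real k + nu))"

definition calH :: "real \<Rightarrow> real \<Rightarrow> real" where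
  "calH nu x = \<bar>x\<^sup>2 - \<bar>nu\<^sup>2 - 1/4\<bar>\<bar> powr (1/4) * bessel_J nu x"

definition local_max_pos :: "(real \<Rightarrow> real) \<Rightarrow> real \<Rightarrow> bool" where
  "local_max_pos f xi \<longleftrightarrow> xi > 0 \<and>
     (\<exists>e>0. \<forall>y. y > 0 \<and> \<bar>y - xi\<bar> < e \<longrightarrow> f y \<le> f xi)"

definition first_pos_local_max :: "(real \<Rightarrow> real) \<Rightarrow> real \<Rightarrow> bool" where
  "first_pos_local_max f xi \<longleftrightarrow> local_max_pos f xi \<and> f xi > 0 \<and>
     (\<forall>eta. 0 < eta \<and> eta < xi \<longrightarrow> \<not> (local_max_pos f eta \<and> f eta > 0))"

end

theory Submission
  imports Defs
begin

text \<open>Write u = x J'. The Bessel equation becomes J' = u / x and u' = (nu^2 - x^2) J / x, so the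
  energy u^2 - (nu^2 - x^2) J^2 has derivative 2 x J^2 and vanishes at 0+; hence it is positive.
  On (0, nu) this forces J > 0 and u > sqrt (nu^2 - x^2) J, and makes u / J strictly decreasing.
  On (0, sqrt mu) the function calH equals (mu - x^2) powr (1/4) * J, whose logarithmic
  derivative u / (x J) - x / (2 (mu - x^2)) is therefore strictly decreasing, tends to -infinity
  at sqrt mu, and is positive at b = nu sqrt (1 - (2 nu) powr (-2/3)) because there
  u / J > sqrt (nu^2 - b^2) = nu (2 nu) powr (-1/3). Its zero in (b, sqrt mu) is the first positive
  local maximum of calH.\<close>

definition bessel_form :: "real \<Rightarrow> (real \<Rightarrow> real) \<Rightarrow> real \<Rightarrow> real" where
  "bessel_form nu h x = (x/2) powr nu * h (x\<^sup>2/4)"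

lemma has_real_derivative_bessel_form:
  assumes "x > 0" and "(h has_real_derivative h') (at (x\<^sup>2/4))"
  shows "(bessel_form nu h has_real_derivative
           (x/2) powr nu * (nu * h (x\<^sup>2/4) + x\<^sup>2/2 * h') / x) (at x)"
proof -
  have power: "((\<lambda>x. (x/2) powr nu) has_real_derivative nu * (x/2) powr (nu - 1) * (1/2)) (at x)"
    using assms(1) by (auto intro!: derivative_eq_intros)
  have "((\<lambda>x. x\<^sup>2/4) has_real_derivative x/2) (at x)"
    by (auto intro!: derivative_eq_intros)
  then have "((\<lambda>x. h (x\<^sup>2/4)) has_real_derivative h' * (x/2)) (at x)"
    by (rule DERIV_chain2[of h h' "\<lambda>x. x\<^sup>2/4", OF assms(2)])
  with power have "(bessel_form nu h has_real_derivative
      nu * (x/2) powr (nu - 1) * (1/2) * h (x\<^sup>2/4) + h' * (x/2) * (x/2) powr nu) (at x)"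
    unfolding bessel_form_def [abs_def] by (rule DERIV_mult)
  moreover have "(x/2) powr (nu - 1) = (x/2) powr nu * 2 / x"
    using assms(1) by (simp add: powr_diff)
  ultimately show ?thesis
    using assms(1) by (simp add: field_simps power2_eq_square)
qed

lemma tendsto_bessel_form_at_right_0:
  assumes "nu > 0" and "isCont h 0"
  shows "(bessel_form nu h \<longlongrightarrow> 0) (at_right 0)"
proof -
  have "((\<lambda>x::real. (x/2) powr nu) \<longlongrightarrow> 0) (at_right 0)"
  proof (rule tendsto_zero_powrI)
    show "\<forall>\<^sub>F x in at_right 0. 0 \<le> (x::real)/2"
      using eventually_at_right_less[of "0::real"] by eventually_elim simp
  qed (use assms(1) in \<open>auto intro!: tendsto_eq_intros\<close>)
  moreover have "((\<lambda>x. h (x\<^sup>2/4)) \<longlongrightarrow> h 0) (at_right 0)"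
    by (rule isCont_tendsto_compose[OF assms(2)]) (auto intro!: tendsto_eq_intros)
  ultimately show ?thesis
    unfolding bessel_form_def [abs_def] using tendsto_mult by fastforce
qed

lemma eventually_bessel_form_pos:
  assumes "isCont h 0" and "h 0 > 0"
  shows "\<forall>\<^sub>F x in at_right 0. bessel_form nu h x > 0"
proof -
  have "((\<lambda>x. h (x\<^sup>2/4)) \<longlongrightarrow> h 0) (at_right 0)"
    by (rule isCont_tendsto_compose[OF assms(1)]) (auto intro!: tendsto_eq_intros)
  then have "\<forall>\<^sub>F x in at_right 0. h (x\<^sup>2/4) > 0"
    using assms(2) by (rule order_tendstoD(1))
  with eventually_at_right_less[of "0::real"] show ?thesis
    by eventually_elim (simp add: bessel_form_def)
qed

lemma first_pos_local_max_by_derivative_sign: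
  fixes f f' :: "real \<Rightarrow> real"
  assumes "0 < xi" "xi < c" "f xi > 0"
    and deriv: "\<And>x. 0 < x \<Longrightarrow> x < c \<Longrightarrow> (f has_real_derivative f' x) (at x)"
    and up: "\<And>x. 0 < x \<Longrightarrow> x < xi \<Longrightarrow> f' x > 0"
    and down: "\<And>x. xi < x \<Longrightarrow> x < c \<Longrightarrow> f' x < 0"
  shows "first_pos_local_max f xi"
proof -
  have cont: "continuous_on {l..r} f" if "0 < l" "r < c" for l r
    using that by (intro continuous_at_imp_continuous_on ballI DERIV_isCont[OF deriv]) auto
  have increasing: "f x < f z" if "0 < x" "x < z" "z \<le> xi" for x z
  proof (rule DERIV_pos_imp_increasing_open[OF that(2) _ cont])
    fix w assume "x < w" "w < z"
    with that assms(2) show "\<exists>y. DERIV f w :> y \<and> y > 0"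
      by (intro exI[of _ "f' w"] conjI deriv up) auto
  qed (use that assms(2) in auto)
  have decreasing: "f z < f x" if "xi \<le> x" "x < z" "z < c" for x z
  proof (rule DERIV_neg_imp_decreasing_open[OF that(2) _ cont])
    fix w assume "x < w" "w < z"
    with that assms(1) show "\<exists>y. DERIV f w :> y \<and> y < 0"
      by (intro exI[of _ "f' w"] conjI deriv down) auto
  qed (use that assms(1) in auto)
  have "local_max_pos f xi"
    unfolding local_max_pos_def
  proof (intro conjI exI[of _ "min xi (c - xi)"] allI impI)
    fix z assume z: "0 < z \<and> \<bar>z - xi\<bar> < min xi (c - xi)"
    show "f z \<le> f xi"
    proof (cases z xi rule: linorder_cases)
      case less
      then show ?thesis using increasing[of z xi] z by simp
    next
      case greater
      then show ?thesis using decreasing[of xi z] z by simp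
    qed simp
  qed (use assms(1,2) in auto)
  moreover have "\<not> local_max_pos f eta" if "0 < eta" "eta < xi" for eta
  proof
    assume "local_max_pos f eta"
    then obtain e where "e > 0" and e: "\<And>z. z > 0 \<and> \<bar>z - eta\<bar> < e \<Longrightarrow> f z \<le> f eta"
      unfolding local_max_pos_def by auto
    define d where "d = min (e/2) ((xi - eta)/2)"
    have "d \<le> e/2" "d \<le> (xi - eta)/2"
      unfolding d_def by (rule min.cobounded1 min.cobounded2)+
    moreover have "0 < d"
      using \<open>e > 0\<close> that by (simp add: d_def)
    ultimately have "eta < eta + d" "eta + d < xi" "\<bar>eta + d - eta\<bar> < e"
      by auto
    then show False
      using e[of "eta + d"] increasing[of eta "eta + d"] that by auto
  qed
  ultimately show ?thesis
    unfolding first_pos_local_max_def using assms(3) by blast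
qed

lemma sqrt_one_minus_powr_bound_identities:
  fixes nu :: real
  assumes "nu > 1/2"
  defines "s \<equiv> nu / (2 * nu) powr (1/3)"
  shows "nu * sqrt (1 - (2 * nu) powr (-2/3)) > 0"
    and "(nu * sqrt (1 - (2 * nu) powr (-2/3)))\<^sup>2 = nu\<^sup>2 - s\<^sup>2"
    and "2 * s ^ 3 = nu\<^sup>2" and "s > 1/2"
proof -
  define r where "r = (2 * nu) powr (1/3)"
  have "2 * nu > 1" using assms(1) by simp
  then have r_pos: "r > 0" by (simp add: r_def)
  have r_pow: "r ^ n = (2 * nu) powr (real n / 3)" for n
    using r_pos \<open>2 * nu > 1\<close> by (simp add: r_def powr_realpow[symmetric] powr_powr)
  have r3: "r ^ 3 = 2 * nu" using r_pow[of 3] \<open>2 * nu > 1\<close> by simp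
  have "(2 * nu) powr (-2/3) = 1 / r\<^sup>2"
    using r_pow[of 2] by (simp add: powr_minus_divide[symmetric])
  then have b: "nu * sqrt (1 - (2 * nu) powr (-2/3)) = nu * sqrt (1 - 1 / r\<^sup>2)" by simp
  have "r > 1"
  proof (rule ccontr)
    assume "\<not> r > 1"
    then have "r ^ 3 \<le> 1" using r_pos by (intro power_le_one) auto
    with r3 \<open>2 * nu > 1\<close> show False by simp
  qed
  then have "1 / r\<^sup>2 < 1" by (simp add: one_less_power)
  then show "nu * sqrt (1 - (2 * nu) powr (-2/3)) > 0"
    using assms(1) b by simp
  show "(nu * sqrt (1 - (2 * nu) powr (-2/3)))\<^sup>2 = nu\<^sup>2 - s\<^sup>2"
    using \<open>1 / r\<^sup>2 < 1\<close> unfolding b s_def r_def[symmetric]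
    by (simp add: power_mult_distrib power_divide right_diff_distrib)
  show "2 * s ^ 3 = nu\<^sup>2"
    using r3 assms(1) unfolding s_def r_def[symmetric]
    by (simp add: power_divide power3_eq_cube power2_eq_square)
  have "r * 1 < r * r\<^sup>2"
    using \<open>r > 1\<close> by (simp add: one_less_power)
  then have "r < 2 * nu"
    using r3 by (simp add: power3_eq_cube power2_eq_square)
  then show "s > 1/2"
    using r_pos unfolding s_def r_def[symmetric] by (simp add: field_simps)
qed

locale bessel_order =
  fixes nu :: real
  assumes nu_pos: "nu > 0"
begin

definition bessel_coeff :: "nat \<Rightarrow> real" where
  "bessel_coeff k = (-1) ^ k / (fact k * Gamma (real k + nu + 1))"

lemma bessel_coeff_Suc:
  "bessel_coeff (Suc n) = - bessel_coeff n / ((real n + 1) * (real n + nu + 1))"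
proof -
  have "real n + nu + 1 \<notin> \<int>\<^sub>\<le>\<^sub>0"
    using nu_pos by (auto elim!: nonpos_Ints_cases)
  then have "Gamma (real (Suc n) + nu + 1) = (real n + nu + 1) * Gamma (real n + nu + 1)"
    using Gamma_plus1[of "real n + nu + 1"] by (simp add: add_ac)
  moreover have "Gamma (real n + nu + 1) > 0"
    using nu_pos by (intro Gamma_real_pos) simp
  ultimately show ?thesis
    using nu_pos by (simp add: bessel_coeff_def field_simps)
qed

lemma bessel_coeff_eq_Suc:
  "bessel_coeff n = - (real n + 1) * (real n + nu + 1) * bessel_coeff (Suc n)"
proof -
  have "(real n + 1) * (real n + nu + 1) \<noteq> 0"
    using nu_pos by (simp add: add_pos_pos)
  then show ?thesis by (simp add: bessel_coeff_Suc field_simps)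
qed

lemma summable_bessel_coeff: "summable (\<lambda>n. bessel_coeff n * t ^ n)"
proof (rule summable_ratio_test[where c = "1/2" and N = "nat \<lceil>2 * \<bar>t\<bar>\<rceil>"])
  fix n assume "n \<ge> nat \<lceil>2 * \<bar>t\<bar>\<rceil>"
  then have "2 * \<bar>t\<bar> \<le> real n" by linarith
  also have "\<dots> \<le> (real n + 1) * 1" by simp
  also have "\<dots> \<le> (real n + 1) * (real n + nu + 1)"
    using nu_pos by (intro mult_left_mono) auto
  finally have "\<bar>t\<bar> / ((real n + 1) * (real n + nu + 1)) \<le> 1/2"
    using nu_pos by (simp add: divide_simps)
  then have "\<bar>bessel_coeff n\<bar> * \<bar>t\<bar> ^ n * (\<bar>t\<bar> / ((real n + 1) * (real n + nu + 1)))
      \<le> \<bar>bessel_coeff n\<bar> * \<bar>t\<bar> ^ n * (1/2)"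
    by (intro mult_left_mono) auto
  then show "norm (bessel_coeff (Suc n) * t ^ Suc n) \<le> 1/2 * norm (bessel_coeff n * t ^ n)"
    using nu_pos by (simp add: bessel_coeff_Suc abs_mult power_abs abs_divide mult_ac)
qed simp

definition F :: "real \<Rightarrow> real" where
  "F t = (\<Sum>n. bessel_coeff n * t ^ n)"

definition dF :: "real \<Rightarrow> real" where
  "dF t = (\<Sum>n. diffs bessel_coeff n * t ^ n)"

definition G :: "real \<Rightarrow> real" where
  "G t = (\<Sum>n. (nu + 2 * real n) * bessel_coeff n * t ^ n)"

lemma F_has_derivative: "(F has_real_derivative dF t) (at t)"
  unfolding F_def dF_def
  by (rule termdiffs_strong_converges_everywhere) (rule summable_bessel_coeff)

lemma summable_diffs_bessel_coeff: "summable (\<lambda>n. diffs bessel_coeff n * t ^ n)"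
  by (rule termdiff_converges_all) (rule summable_bessel_coeff)

lemma sums_G: "(\<lambda>n. (nu + 2 * real n) * bessel_coeff n * t ^ n) sums (nu * F t + 2 * t * dF t)"
proof -
  have "(\<lambda>n. t * (diffs bessel_coeff n * t ^ n)) sums (t * dF t)"
    unfolding dF_def by (intro sums_mult summable_sums summable_diffs_bessel_coeff)
  then have "(\<lambda>n. real (Suc n) * bessel_coeff (Suc n) * t ^ Suc n) sums (t * dF t)"
    by (simp add: diffs_def mult_ac)
  then have "(\<lambda>n. real n * bessel_coeff n * t ^ n) sums (t * dF t)"
    using sums_Suc_iff[of "\<lambda>n. real n * bessel_coeff n * t ^ n"] by simp
  then have "(\<lambda>n. nu * (bessel_coeff n * t ^ n) + 2 * (real n * bessel_coeff n * t ^ n))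
      sums (nu * F t + 2 * (t * dF t))"
    unfolding F_def by (intro sums_add sums_mult summable_sums summable_bessel_coeff)
  then show ?thesis by (simp add: algebra_simps)
qed

lemma G_eq: "G t = nu * F t + 2 * t * dF t"
  using sums_G unfolding G_def by (simp add: sums_iff)

lemma G_has_derivative: "(G has_real_derivative - nu * dF t - 2 * F t) (at t)"
proof -
  define g where "g n = (nu + 2 * real n) * bessel_coeff n" for n
  have diffs_g: "diffs g n = - nu * diffs bessel_coeff n - 2 * bessel_coeff n" for n
    using nu_pos
    by (simp add: diffs_def g_def bessel_coeff_eq_Suc[of n] algebra_simps)
  have "(\<lambda>n. (- nu) * (diffs bessel_coeff n * t ^ n) - 2 * (bessel_coeff n * t ^ n))
      sums (- nu * dF t - 2 * F t)"
    unfolding F_def dF_def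
    by (intro sums_diff sums_mult summable_sums summable_bessel_coeff summable_diffs_bessel_coeff)
  then have "(\<Sum>n. diffs g n * t ^ n) = - nu * dF t - 2 * F t"
    by (simp add: diffs_g sums_iff algebra_simps)
  moreover have "(G has_real_derivative (\<Sum>n. diffs g n * t ^ n)) (at t)"
    unfolding G_def g_def [symmetric]
    using sums_G by (intro termdiffs_strong_converges_everywhere) (auto simp: g_def sums_iff)
  ultimately show ?thesis by simp
qed

lemma F_0: "F 0 = 1 / Gamma (nu + 1)"
  using powser_zero[of bessel_coeff] by (simp add: F_def bessel_coeff_def)

lemma F_0_pos: "F 0 > 0"
  using nu_pos by (simp add: F_0 Gamma_real_pos)

lemma G_0_pos: "G 0 > 0"
  using F_0_pos nu_pos by (simp add: G_eq)

definition J :: "real \<Rightarrow> real" where "J = bessel_form nu F"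
definition u :: "real \<Rightarrow> real" where "u = bessel_form nu G"

lemma bessel_J_eq_J:
  assumes "x > 0" shows "bessel_J nu x = J x"
proof -
  have "(x/2) powr (2 * real k + nu) = (x/2) powr nu * (x\<^sup>2/4) ^ k" for k
  proof -
    have "(x/2) powr (2 * real k) = (x/2) ^ (2 * k)"
      using assms by (simp add: powr_realpow[symmetric])
    also have "\<dots> = (x\<^sup>2/4) ^ k"
      by (simp add: power_mult power_divide)
    finally show ?thesis
      by (simp add: powr_add)
  qed
  then show ?thesis
    unfolding bessel_J_def J_def bessel_form_def F_def bessel_coeff_def [symmetric]
    using suminf_mult[OF summable_bessel_coeff, of "(x/2) powr nu" "x\<^sup>2/4"]
    by (simp add: mult_ac)
qed

lemma J_has_derivative:
  assumes "x > 0" shows "(J has_real_derivative u x / x) (at x)"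
proof -
  have "nu * F (x\<^sup>2/4) + x\<^sup>2/2 * dF (x\<^sup>2/4) = G (x\<^sup>2/4)"
    by (simp add: G_eq)
  then show ?thesis
    using has_real_derivative_bessel_form[OF assms F_has_derivative, of nu]
    by (simp add: J_def u_def bessel_form_def)
qed

lemma u_has_derivative:
  assumes "x > 0" shows "(u has_real_derivative (nu\<^sup>2 - x\<^sup>2) * J x / x) (at x)"
proof -
  have "nu * G (x\<^sup>2/4) + x\<^sup>2/2 * (- nu * dF (x\<^sup>2/4) - 2 * F (x\<^sup>2/4))
      = (nu\<^sup>2 - x\<^sup>2) * F (x\<^sup>2/4)"
    by (simp add: G_eq algebra_simps power2_eq_square)
  then show ?thesis
    using has_real_derivative_bessel_form[OF assms G_has_derivative, of nu]
    by (simp add: J_def u_def bessel_form_def mult_ac)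
qed

lemma continuous_on_J: "0 < l \<Longrightarrow> continuous_on {l..r} J"
  by (intro continuous_at_imp_continuous_on ballI DERIV_isCont[OF J_has_derivative]) auto

lemma continuous_on_u: "0 < l \<Longrightarrow> continuous_on {l..r} u"
  by (intro continuous_at_imp_continuous_on ballI DERIV_isCont[OF u_has_derivative]) auto

lemma J_tendsto_0: "(J \<longlongrightarrow> 0) (at_right 0)"
  unfolding J_def using nu_pos F_has_derivative
  by (intro tendsto_bessel_form_at_right_0 DERIV_isCont)

lemma u_tendsto_0: "(u \<longlongrightarrow> 0) (at_right 0)"
  unfolding u_def using nu_pos G_has_derivative
  by (intro tendsto_bessel_form_at_right_0 DERIV_isCont)

lemma eventually_J_pos: "\<forall>\<^sub>F x in at_right 0. J x > 0"
  unfolding J_def using F_0_pos F_has_derivative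
  by (intro eventually_bessel_form_pos DERIV_isCont)

lemma eventually_u_pos: "\<forall>\<^sub>F x in at_right 0. u x > 0"
  unfolding u_def using G_0_pos G_has_derivative
  by (intro eventually_bessel_form_pos DERIV_isCont)

definition energy :: "real \<Rightarrow> real" where
  "energy x = (u x)\<^sup>2 - (nu\<^sup>2 - x\<^sup>2) * (J x)\<^sup>2"

lemma energy_has_derivative:
  assumes "x > 0" shows "(energy has_real_derivative 2 * x * (J x)\<^sup>2) (at x)"
proof -
  have "(energy has_real_derivative
      2 * u x * ((nu\<^sup>2 - x\<^sup>2) * J x / x) - ((0 - 2 * x) * (J x)\<^sup>2 + (nu\<^sup>2 - x\<^sup>2) * (2 * J x * (u x / x)))) (at x)"
    unfolding energy_def [abs_def]
    by (rule derivative_eq_intros refl u_has_derivative J_has_derivative assms | simp)+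
  then show ?thesis
    using assms by (simp add: field_simps)
qed

lemma energy_tendsto_0: "(energy \<longlongrightarrow> 0) (at_right 0)"
proof -
  have "((\<lambda>x. (u x)\<^sup>2 - (nu\<^sup>2 - x\<^sup>2) * (J x)\<^sup>2) \<longlongrightarrow> 0\<^sup>2 - (nu\<^sup>2 - 0\<^sup>2) * 0\<^sup>2) (at_right 0)"
    by (intro tendsto_intros u_tendsto_0 J_tendsto_0)
  then show ?thesis unfolding energy_def [abs_def] by simp
qed

lemma energy_mono:
  assumes "0 < x" "x \<le> y" shows "energy x \<le> energy y"
proof (rule DERIV_nonneg_imp_nondecreasing[OF assms(2)])
  fix z assume "x \<le> z" "z \<le> y"
  with assms show "\<exists>w. DERIV energy z :> w \<and> w \<ge> 0"
    by (intro exI[of _ "2 * z * (J z)\<^sup>2"] conjI energy_has_derivative) auto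
qed

lemma energy_pos:
  assumes "x > 0" shows "energy x > 0"
proof -
  obtain s0 where "s0 > 0" and J_pos_near: "\<And>y. 0 < y \<Longrightarrow> y < s0 \<Longrightarrow> J y > 0"
    using eventually_J_pos unfolding eventually_at_right_field by auto
  define s where "s = min x (s0/2)"
  have s: "0 < s" "s \<le> x" "s < s0"
    using assms \<open>s0 > 0\<close> by (auto simp: s_def)
  have "\<forall>\<^sub>F y in at_right 0. energy y \<le> energy (s/2)"
    using s(1) energy_mono unfolding eventually_at_right_field by (intro exI[of _ "s/2"]) auto
  then have "0 \<le> energy (s/2)"
    using tendsto_upperbound[OF energy_tendsto_0] by auto
  also have "energy (s/2) < energy s"
  proof (rule DERIV_pos_imp_increasing[of "s/2" s energy])
    fix y assume "s/2 \<le> y" "y \<le> s"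
    with s have "0 < y" "J y > 0"
      by (auto intro: J_pos_near)
    then show "\<exists>z. DERIV energy y :> z \<and> z > 0"
      by (intro exI[of _ "2 * y * (J y)\<^sup>2"] conjI energy_has_derivative) auto
  qed (use s in auto)
  also have "energy s \<le> energy x"
    using energy_mono s by simp
  finally show ?thesis .
qed

lemma u_nonzero:
  assumes "0 < x" "x < nu" shows "u x \<noteq> 0"
proof
  assume "u x = 0"
  moreover have "nu\<^sup>2 - x\<^sup>2 \<ge> 0"
    using assms by (simp add: power_mono)
  ultimately have "energy x \<le> 0"
    by (simp add: energy_def)
  with energy_pos[OF assms(1)] show False by simp
qed

lemma u_pos:
  assumes "0 < x" "x < nu" shows "u x > 0"
proof (rule ccontr)
  assume "\<not> u x > 0"
  with u_nonzero[OF assms] have "u x < 0" by simp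
  obtain s0 where "s0 > 0" and u_pos_near: "\<And>y. 0 < y \<Longrightarrow> y < s0 \<Longrightarrow> u y > 0"
    using eventually_u_pos unfolding eventually_at_right_field by auto
  define s where "s = min (x/2) (s0/2)"
  have s: "0 < s" "s < x" "u s > 0"
    using assms \<open>s0 > 0\<close> by (auto simp: s_def intro!: u_pos_near)
  obtain z where "s \<le> z" "z \<le> x" "u z = 0"
    using IVT2'[of u x 0 s] s \<open>u x < 0\<close> continuous_on_u[of s x] by auto
  with u_nonzero[of z] s assms show False by auto
qed

lemma J_pos:
  assumes "0 < x" "x < nu" shows "J x > 0"
proof -
  obtain s0 where "s0 > 0" and J_pos_near: "\<And>y. 0 < y \<Longrightarrow> y < s0 \<Longrightarrow> J y > 0"
    using eventually_J_pos unfolding eventually_at_right_field by auto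
  define s where "s = min (x/2) (s0/2)"
  have s: "0 < s" "s < x" "J s > 0"
    using assms \<open>s0 > 0\<close> by (auto simp: s_def intro!: J_pos_near)
  have "J s < J x"
  proof (rule DERIV_pos_imp_increasing[of s x J])
    fix z assume "s \<le> z" "z \<le> x"
    with s assms have "0 < z" "u z / z > 0"
      using u_pos[of z] by auto
    then show "\<exists>w. DERIV J z :> w \<and> w > 0"
      using J_has_derivative by blast
  qed (use s in auto)
  with s show ?thesis by simp
qed

lemma u_gt_sqrt_mult_J:
  assumes "0 < x" "x < nu" shows "u x > sqrt (nu\<^sup>2 - x\<^sup>2) * J x"
proof -
  have "nu\<^sup>2 - x\<^sup>2 \<ge> 0"
    using assms by (simp add: power_mono)
  then have "(sqrt (nu\<^sup>2 - x\<^sup>2) * J x)\<^sup>2 < (u x)\<^sup>2"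
    using energy_pos[OF assms(1)] by (simp add: energy_def power_mult_distrib)
  then show ?thesis
    using power2_less_imp_less u_pos[OF assms] by fastforce
qed

definition log_slope :: "real \<Rightarrow> real" where
  "log_slope x = u x / J x"

lemma log_slope_has_derivative:
  assumes "0 < x" "x < nu"
  shows "(log_slope has_real_derivative - energy x / (x * (J x)\<^sup>2)) (at x)"
proof -
  have "(log_slope has_real_derivative
      ((nu\<^sup>2 - x\<^sup>2) * J x / x * J x - u x * (u x / x)) / (J x * J x)) (at x)"
    unfolding log_slope_def [abs_def] using J_pos[OF assms]
    by (intro DERIV_divide u_has_derivative J_has_derivative assms) auto
  moreover have "((nu\<^sup>2 - x\<^sup>2) * J x / x * J x - u x * (u x / x)) / (J x * J x)
      = - energy x / (x * (J x)\<^sup>2)"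
    using assms J_pos[OF assms] by (simp add: energy_def field_simps power2_eq_square)
  ultimately show ?thesis by simp
qed

lemma log_slope_strict_decreasing:
  assumes "0 < x" "x < y" "y < nu" shows "log_slope y < log_slope x"
proof (rule DERIV_neg_imp_decreasing[of x y log_slope])
  fix z assume "x \<le> z" "z \<le> y"
  with assms have z: "0 < z" "z < nu" by auto
  have "- energy z / (z * (J z)\<^sup>2) < 0"
    using energy_pos[of z] J_pos[OF z] z by (simp add: divide_neg_pos)
  then show "\<exists>w. DERIV log_slope z :> w \<and> w < 0"
    using log_slope_has_derivative[OF z] by blast
qed (use assms in auto)

lemma log_slope_gt_sqrt:
  assumes "0 < x" "x < nu" shows "log_slope x > sqrt (nu\<^sup>2 - x\<^sup>2)"
  using u_gt_sqrt_mult_J[OF assms] J_pos[OF assms]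
  by (simp add: log_slope_def pos_less_divide_eq)

end

locale bessel_order_gt_half = bessel_order +
  assumes nu_gt_half: "nu > 1/2"
begin

definition mu :: real where "mu = nu\<^sup>2 - 1/4"

definition calH_log_deriv :: "real \<Rightarrow> real" where
  "calH_log_deriv x = log_slope x / x - x / (2 * (mu - x\<^sup>2))"

lemma mu_pos: "mu > 0"
proof -
  have "(1/2)\<^sup>2 < nu\<^sup>2"
    using nu_gt_half by (intro power_strict_mono) auto
  then show ?thesis by (simp add: mu_def power_divide)
qed

lemma sqrt_mu_less_nu: "sqrt mu < nu"
  using real_sqrt_less_mono[of mu "nu\<^sup>2"] nu_pos by (simp add: mu_def)

lemma square_less_mu:
  assumes "0 < x" "x < sqrt mu" shows "x\<^sup>2 < mu"
proof -
  have "x\<^sup>2 < (sqrt mu)\<^sup>2"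
    using assms by (intro power_strict_mono) auto
  then show ?thesis using mu_pos by simp
qed

lemma calH_eq:
  assumes "0 < x" "x < sqrt mu" shows "calH nu x = (mu - x\<^sup>2) powr (1/4) * J x"
proof -
  have "\<bar>nu\<^sup>2 - 1/4\<bar> = mu" and "\<bar>x\<^sup>2 - mu\<bar> = mu - x\<^sup>2"
    using mu_pos square_less_mu[OF assms] by (simp_all add: mu_def)
  then show ?thesis
    unfolding calH_def using bessel_J_eq_J[OF assms(1)] by simp
qed

lemma calH_has_derivative:
  assumes "0 < x" "x < sqrt mu"
  shows "(calH nu has_real_derivative (mu - x\<^sup>2) powr (1/4) * J x * calH_log_deriv x) (at x)"
proof -
  have pos: "mu - x\<^sup>2 > 0" and "J x > 0"
    using square_less_mu[OF assms] J_pos assms sqrt_mu_less_nu by auto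
  have e: "(mu - x\<^sup>2) powr (1/4 - 1) = (mu - x\<^sup>2) powr (1/4) / (mu - x\<^sup>2)"
    using powr_diff[of "mu - x\<^sup>2" "1/4" 1] pos by simp
  have "((\<lambda>x. (mu - x\<^sup>2) powr (1/4) * J x) has_real_derivative
      (1/4) * (mu - x\<^sup>2) powr (1/4 - 1) * (- 2 * x) * J x + u x / x * (mu - x\<^sup>2) powr (1/4)) (at x)"
    using pos assms(1) by (auto intro!: derivative_eq_intros J_has_derivative)
  moreover have "(1/4) * (mu - x\<^sup>2) powr (1/4 - 1) * (- 2 * x) * J x + u x / x * (mu - x\<^sup>2) powr (1/4)
      = (mu - x\<^sup>2) powr (1/4) * J x * calH_log_deriv x"
    using pos assms(1) \<open>J x > 0\<close>
    unfolding e calH_log_deriv_def log_slope_def by (simp add: field_simps)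
  ultimately have "((\<lambda>x. (mu - x\<^sup>2) powr (1/4) * J x) has_real_derivative
      (mu - x\<^sup>2) powr (1/4) * J x * calH_log_deriv x) (at x)"
    by (simp only:)
  then show ?thesis
    by (rule has_field_derivative_transform_within_open[of _ _ _ "{0<..<sqrt mu}"])
      (use assms calH_eq in auto)
qed

lemma calH_log_deriv_strict_decreasing:
  assumes "0 < x" "x < y" "y < sqrt mu" shows "calH_log_deriv y < calH_log_deriv x"
proof -
  have "y < nu" using assms sqrt_mu_less_nu by simp
  then have "0 \<le> nu\<^sup>2 - y\<^sup>2"
    using assms by (simp add: power_mono)
  then have "0 < log_slope y"
    using log_slope_gt_sqrt[of y] assms \<open>y < nu\<close> real_sqrt_ge_zero[of "nu\<^sup>2 - y\<^sup>2"] by linarith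
  then have "log_slope y / y < log_slope y / x"
    using assms by (intro divide_strict_left_mono) auto
  also have "\<dots> < log_slope x / x"
    using log_slope_strict_decreasing[of x y] assms \<open>y < nu\<close> by (intro divide_strict_right_mono) auto
  finally have "log_slope y / y < log_slope x / x" .
  moreover have "x / (2 * (mu - x\<^sup>2)) < y / (2 * (mu - y\<^sup>2))"
  proof (rule frac_less)
    have "x\<^sup>2 < y\<^sup>2"
      using assms by (intro power_strict_mono) auto
    then show "2 * (mu - y\<^sup>2) \<le> 2 * (mu - x\<^sup>2)" by simp
    show "0 < 2 * (mu - y\<^sup>2)"
      using square_less_mu[of y] assms by simp
  qed (use assms in auto)
  ultimately show ?thesis
    unfolding calH_log_deriv_def by simp
qed

lemma calH_log_deriv_has_zero:
  assumes "0 < b" "b < sqrt mu" "calH_log_deriv b > 0"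
  obtains xi where "b < xi" "xi < sqrt mu" "calH_log_deriv xi = 0"
proof -
  txt \<open>P clears the denominators of calH_log_deriv, so it stays continuous up to sqrt mu,
    where it equals - mu J / 2.\<close>
  define P where "P x = (mu - x\<^sup>2) * u x - x\<^sup>2 / 2 * J x" for x
  have P_eq: "P x = x * J x * (mu - x\<^sup>2) * calH_log_deriv x" if "0 < x" "x < sqrt mu" for x
  proof -
    have "J x > 0" "mu - x\<^sup>2 > 0"
      using J_pos[of x] square_less_mu[of x] that sqrt_mu_less_nu by auto
    then show ?thesis
      using that unfolding P_def calH_log_deriv_def log_slope_def
      by (simp add: field_simps power2_eq_square)
  qed
  have "P b > 0"
    using P_eq[OF assms(1,2)] assms J_pos[of b] square_less_mu[of b] sqrt_mu_less_nu by simp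
  moreover have "P (sqrt mu) < 0"
    using mu_pos J_pos[of "sqrt mu"] sqrt_mu_less_nu by (simp add: P_def)
  moreover have "continuous_on {b..sqrt mu} P"
    unfolding P_def using assms(1)
    by (intro continuous_intros continuous_on_J continuous_on_u) auto
  ultimately obtain xi where xi: "b \<le> xi" "xi \<le> sqrt mu" "P xi = 0"
    using IVT2'[of P "sqrt mu" 0 b] assms(2) by auto
  then have "b < xi" "xi < sqrt mu"
    using \<open>P b > 0\<close> \<open>P (sqrt mu) < 0\<close> by (auto simp: order.order_iff_strict)
  moreover have "calH_log_deriv xi = 0"
    using P_eq[of xi] xi \<open>b < xi\<close> \<open>xi < sqrt mu\<close> assms(1)
      J_pos[of xi] square_less_mu[of xi] sqrt_mu_less_nu by auto
  ultimately show ?thesis using that by blast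
qed

lemma first_pos_local_max_calH:
  assumes "0 < xi" "xi < sqrt mu" "calH_log_deriv xi = 0"
  shows "first_pos_local_max (calH nu) xi"
proof (rule first_pos_local_max_by_derivative_sign[OF assms(1,2) _ calH_has_derivative])
  have weight_pos: "(mu - x\<^sup>2) powr (1/4) * J x > 0" if "0 < x" "x < sqrt mu" for x
    using that square_less_mu[OF that] J_pos[of x] sqrt_mu_less_nu by simp
  show "calH nu xi > 0"
    using weight_pos[OF assms(1,2)] calH_eq[OF assms(1,2)] by simp
  fix x
  show "(mu - x\<^sup>2) powr (1/4) * J x * calH_log_deriv x > 0" if "0 < x" "x < xi"
    using that assms weight_pos[of x] calH_log_deriv_strict_decreasing[of x xi] by simp
  show "(mu - x\<^sup>2) powr (1/4) * J x * calH_log_deriv x < 0" if "xi < x" "x < sqrt mu"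
    using that assms weight_pos[of x] calH_log_deriv_strict_decreasing[of xi x]
    by (simp add: mult_pos_neg)
qed

lemma calH_log_deriv_pos_at_bound:
  defines "b \<equiv> nu * sqrt (1 - (2 * nu) powr (-2/3))"
  shows "0 < b" and "b < sqrt mu" and "calH_log_deriv b > 0"
proof -
  define s where "s = nu / (2 * nu) powr (1/3)"
  note bound = sqrt_one_minus_powr_bound_identities[OF nu_gt_half, folded b_def s_def]
  show "0 < b" by (fact bound(1))
  have mu_minus: "mu - b\<^sup>2 = s\<^sup>2 - 1/4"
    using bound(2) by (simp add: mu_def)
  have "(1/2)\<^sup>2 < s\<^sup>2"
    using bound(4) by (intro power_strict_mono) auto
  then have "b\<^sup>2 < mu" using mu_minus by (simp add: power_divide)
  then show "b < sqrt mu"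
    using \<open>0 < b\<close> real_less_rsqrt by blast
  then have "b < nu" using sqrt_mu_less_nu by simp
  then have "log_slope b > s"
    using log_slope_gt_sqrt[OF \<open>0 < b\<close>] bound(2,4) by simp
  have "b * b \<le> s * (2 * (mu - b\<^sup>2))"
  proof -
    have "s * (1/2) \<le> s * s" using bound(4) by (intro mult_left_mono) auto
    then show ?thesis
      using bound(2,3) unfolding mu_minus by (simp add: power2_eq_square power3_eq_cube algebra_simps)
  qed
  then have "b / (2 * (mu - b\<^sup>2)) \<le> s / b"
    using \<open>0 < b\<close> \<open>b\<^sup>2 < mu\<close> by (simp add: divide_simps)
  also have "s / b < log_slope b / b"
    using \<open>log_slope b > s\<close> \<open>0 < b\<close> by (simp add: divide_strict_right_mono)
  finally have "b / (2 * (mu - b\<^sup>2)) < log_slope b / b" .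
  then show "calH_log_deriv b > 0"
    by (simp add: calH_log_deriv_def)
qed

theorem first_pos_local_max_calH_gt_bound:
  "\<exists>xi. first_pos_local_max (calH nu) xi \<and> xi > nu * sqrt (1 - (2 * nu) powr (-2/3))"
proof -
  obtain xi where "nu * sqrt (1 - (2 * nu) powr (-2/3)) < xi" "xi < sqrt mu" "calH_log_deriv xi = 0"
    using calH_log_deriv_has_zero calH_log_deriv_pos_at_bound by blast
  moreover from this have "first_pos_local_max (calH nu) xi"
    using calH_log_deriv_pos_at_bound(1) by (intro first_pos_local_max_calH) auto
  ultimately show ?thesis by blast
qed

end

theorem mainTheorem2:
  fixes nu :: real
  assumes "nu \<ge> 5/3"
  shows "\<exists>xi. first_pos_local_max (calH nu) xi \<and>
           xi > nu * sqrt (1 - (2 * nu) powr (-2/3))"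
proof -
  interpret bessel_order_gt_half nu
    using assms by unfold_locales auto
  show ?thesis by (rule first_pos_local_max_calH_gt_bound)
qed

end
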